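(* Let $G$ be a finite simple graph. Define recursively: $G_1=G$; for $i\ge 1$, if $G_i$ is nonempty, let $F_i$ be an induced linear forest of $G_i$ of maximum order, chosen among all maximum-order induced linear forests of $G_i$ to have the minimum number of edges, and let $G_{i+1}=G\setminus\bigcup_{j=1}^{i}V(F_j)$ (the subgraph induced on the remaining vertices). Stop when all vertices are used, obtaining a partition $V(G)=V(F_1)\cup\cdots\cup V(F_k)$. Then for every $i\ge 2$, every $v\in V(F_i)$ and every $j<i$, the vertex $v$ has at least $2$ neighbors in $V(F_j)$.
   Context: A linear forest is a forest each of whose connected components is a path (a single vertex counts as a path). An induced linear forest of a graph $H$ is an induced subgraph of $H$ that is a linear forest; its order is its number of vertices and its size is its number of edges. *)

theory Defs
  imports Main
begin

definition simple_graph :: "'a set \<Rightarrow> ('a \<Rightarrow> 'a \<Rightarrow> bool) \<Rightarrow> bool" where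
  "simple_graph V E \<longleftrightarrow> finite V \<and>
     (\<forall>u v. E u v \<longrightarrow> u \<in> V \<and> v \<in> V \<and> u \<noteq> v \<and> E v u)"

definition induced_adj :: "('a \<Rightarrow> 'a \<Rightarrow> bool) \<Rightarrow> 'a set \<Rightarrow> 'a \<Rightarrow> 'a \<Rightarrow> bool" where
  "induced_adj E S u v \<longleftrightarrow> u \<in> S \<and> v \<in> S \<and> E u v"

definition is_component :: "('a \<Rightarrow> 'a \<Rightarrow> bool) \<Rightarrow> 'a set \<Rightarrow> 'a set \<Rightarrow> bool" where
  "is_component E S C \<longleftrightarrow> (\<exists>u\<in>S. C = {v. (induced_adj E S)\<^sup>*\<^sup>* u v})"

definition induces_path :: "('a \<Rightarrow> 'a \<Rightarrow> bool) \<Rightarrow> 'a set \<Rightarrow> bool" where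
  "induces_path E C \<longleftrightarrow> (\<exists>xs. distinct xs \<and> set xs = C \<and>
     (\<forall>i j. i < length xs \<longrightarrow> j < length xs \<longrightarrow>
        (E (xs ! i) (xs ! j) \<longleftrightarrow> i = Suc j \<or> j = Suc i)))"

definition induced_linear_forest :: "'a set \<Rightarrow> ('a \<Rightarrow> 'a \<Rightarrow> bool) \<Rightarrow> 'a set \<Rightarrow> bool" where
  "induced_linear_forest V E S \<longleftrightarrow> S \<subseteq> V \<and>
     (\<forall>C. is_component E S C \<longrightarrow> induces_path E C)"

definition induced_size :: "('a \<Rightarrow> 'a \<Rightarrow> bool) \<Rightarrow> 'a set \<Rightarrow> nat" where
  "induced_size E S = card {{u, v} | u v. u \<in> S \<and> v \<in> S \<and> E u v}"

definition optimal_ilf :: "'a set \<Rightarrow> ('a \<Rightarrow> 'a \<Rightarrow> bool) \<Rightarrow> 'a set \<Rightarrow> bool" where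
  "optimal_ilf V E S \<longleftrightarrow> induced_linear_forest V E S \<and>
     (\<forall>T. induced_linear_forest V E T \<longrightarrow> card T \<le> card S) \<and>
     (\<forall>T. induced_linear_forest V E T \<and> card T = card S \<longrightarrow>
          induced_size E S \<le> induced_size E T)"

end

theory Submission
  imports Defs
begin

text \<open>Let v lie in a later forest F i and suppose it had at most one neighbour in an
  earlier forest F j; v was still available when F j was chosen.  If v has no neighbour
  in F j, or its only neighbour u is isolated in F j, then F j + v is a larger induced
  linear forest.  Otherwise u has a neighbour in F j, and F j - u + v is an induced linear
  forest of the same order with fewer edges.  Either way F j was not optimal.\<close>

lemma path_connected_indices_interval:
  assumes dist: "distinct xs"
    and path: "\<forall>i j. i < length xs \<longrightarrow> j < length xs \<longrightarrow> (E (xs!i) (xs!j) \<longleftrightarrow> i = Suc j \<or> j = Suc i)"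
    and D: "D \<subseteq> set xs" and rD: "r \<in> D"
    and conn: "\<forall>y\<in>D. (induced_adj E D)\<^sup>*\<^sup>* r y"
    and a: "a < length xs" "xs!a \<in> D" and b: "b < length xs" "xs!b \<in> D"
    and m: "a \<le> m" "m \<le> b"
  shows "xs!m \<in> D"
proof (rule ccontr)
  assume mD: "xs!m \<notin> D"
  have index: "\<exists>k<length xs. xs!k = y" if "y \<in> D" for y
    using that D by (metis in_set_conv_nth subsetD)
  have index_unique: "k = l" if "k < length xs" "l < length xs" "xs!k = xs!l" for k l
    using that dist nth_eq_iff_index_eq by blast
  obtain c where c: "c < length xs" "xs!c = r" using index rD by blast
  \<comment> \<open>Edges change the index by one and never reach index m, so reachability from r
      keeps every index on the same side of m as the index of r.\<close>
  have same_side: "(k < m) = (c < m)"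
    if "(induced_adj E D)\<^sup>*\<^sup>* r y" "k < length xs" "xs!k = y" for y k
    using that
  proof (induction arbitrary: k rule: rtranclp_induct)
    case base
    then show ?case using c index_unique by blast
  next
    case (step y z)
    have "y \<in> D" "z \<in> D" "E y z" using step.hyps(2) unfolding induced_adj_def by auto
    obtain l where l: "l < length xs" "xs!l = y" using index \<open>y \<in> D\<close> by blast
    have "l = Suc k \<or> k = Suc l" using path l step.prems \<open>E y z\<close> by blast
    moreover have "k \<noteq> m" "l \<noteq> m" using mD step.prems l \<open>y \<in> D\<close> \<open>z \<in> D\<close> by auto
    ultimately show ?case using step.IH[OF l] by presburger
  qed
  have "a \<noteq> m" "b \<noteq> m" using a b mD by auto
  then show False using same_side[OF _ a(1)] same_side[OF _ b(1)] conn a b m by fastforce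
qed

lemma induces_path_connected_subset:
  assumes dist: "distinct xs"
    and path: "\<forall>i j. i < length xs \<longrightarrow> j < length xs \<longrightarrow> (E (xs!i) (xs!j) \<longleftrightarrow> i = Suc j \<or> j = Suc i)"
    and D: "D \<subseteq> set xs" and rD: "r \<in> D"
    and conn: "\<forall>y\<in>D. (induced_adj E D)\<^sup>*\<^sup>* r y"
  shows "induces_path E D"
proof -
  define K where "K = {k. k < length xs \<and> xs!k \<in> D}"
  have "finite K" unfolding K_def by simp
  have "K \<noteq> {}" using rD D unfolding K_def by (metis empty_iff in_set_conv_nth mem_Collect_eq subsetD)
  define a where "a = Min K"
  define b where "b = Max K"
  have "a \<in> K" "b \<in> K"
    using \<open>finite K\<close> \<open>K \<noteq> {}\<close> unfolding a_def b_def by simp_all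
  then have a: "a < length xs" "xs!a \<in> D" and b: "b < length xs" "xs!b \<in> D"
    unfolding K_def by simp_all
  have K_bounds: "a \<le> k" "k \<le> b" if "k \<in> K" for k
    using that \<open>finite K\<close> unfolding a_def b_def by simp_all
  define ys where "ys = take (Suc b - a) (drop a xs)"
  have len_ys: "length ys = Suc b - a"
    using b(1) K_bounds(1)[OF \<open>b \<in> K\<close>] unfolding ys_def by simp
  have nth_ys: "ys!i = xs!(a+i)" if "i < length ys" for i
    using that len_ys a(1) unfolding ys_def by simp
  have "set ys = D"
  proof
    show "set ys \<subseteq> D"
    proof
      fix y assume "y \<in> set ys"
      then obtain i where "i < length ys" "ys!i = y" by (auto simp: in_set_conv_nth)
      moreover have "a \<le> a + i" "a + i \<le> b" using \<open>i < length ys\<close> len_ys by simp_all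
      ultimately show "y \<in> D"
        using path_connected_indices_interval[OF dist path D rD conn a b] nth_ys by metis
    qed
    show "D \<subseteq> set ys"
    proof
      fix y assume "y \<in> D"
      then obtain k where k: "k < length xs" "xs!k = y" using D by (metis in_set_conv_nth subsetD)
      then have "k \<in> K" using \<open>y \<in> D\<close> unfolding K_def by simp
      then have "k - a < length ys" "a + (k - a) = k" using K_bounds[of k] len_ys by simp_all
      then show "y \<in> set ys" using nth_ys k by (metis nth_mem)
    qed
  qed
  moreover have "distinct ys" using dist unfolding ys_def by simp
  moreover have "E (ys!i) (ys!j) \<longleftrightarrow> i = Suc j \<or> j = Suc i"
    if "i < length ys" "j < length ys" for i j
  proof -
    have "a + i < length xs" "a + j < length xs" using that len_ys b(1) by simp_all
    then have "E (xs!(a+i)) (xs!(a+j)) \<longleftrightarrow> a + i = Suc (a + j) \<or> a + j = Suc (a + i)"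
      using path by blast
    then show ?thesis using that nth_ys by simp
  qed
  ultimately show ?thesis unfolding induces_path_def by blast
qed

lemma component_connected:
  assumes "C = {y. (induced_adj E S)\<^sup>*\<^sup>* r y}"
  shows "\<forall>y\<in>C. (induced_adj E C)\<^sup>*\<^sup>* r y"
proof
  fix y assume "y \<in> C"
  then have "(induced_adj E S)\<^sup>*\<^sup>* r y" using assms by auto
  then show "(induced_adj E C)\<^sup>*\<^sup>* r y"
  proof (induction rule: rtranclp_induct)
    case (step y z)
    then have "y \<in> C" "z \<in> C" using assms by (auto intro: rtranclp.rtrancl_into_rtrancl)
    then have "induced_adj E C y z" using step.hyps(2) unfolding induced_adj_def by auto
    then show ?case using step.IH by auto
  qed simp
qed

lemma induced_linear_forest_subset:
  assumes ilf: "induced_linear_forest V E S" and TS: "T \<subseteq> S"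
  shows "induced_linear_forest V E T"
  unfolding induced_linear_forest_def
proof (intro conjI allI impI)
  show "T \<subseteq> V" using assms unfolding induced_linear_forest_def by auto
  fix D assume "is_component E T D"
  then obtain r where "r \<in> T" and D: "D = {y. (induced_adj E T)\<^sup>*\<^sup>* r y}"
    unfolding is_component_def by auto
  define C where "C = {y. (induced_adj E S)\<^sup>*\<^sup>* r y}"
  have "induced_adj E T \<le> induced_adj E S" using TS unfolding induced_adj_def by auto
  then have "(induced_adj E T)\<^sup>*\<^sup>* \<le> (induced_adj E S)\<^sup>*\<^sup>*" by (rule rtranclp_mono)
  then have "D \<subseteq> C" unfolding D C_def by (auto dest: predicate2D)
  have "is_component E S C" unfolding is_component_def C_def using \<open>r \<in> T\<close> TS by auto
  then obtain xs where xs: "distinct xs" "set xs = C"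
    "\<forall>i j. i < length xs \<longrightarrow> j < length xs \<longrightarrow> (E (xs!i) (xs!j) \<longleftrightarrow> i = Suc j \<or> j = Suc i)"
    using ilf unfolding induced_linear_forest_def induces_path_def by blast
  show "induces_path E D"
    by (rule induces_path_connected_subset[OF xs(1) xs(3) _ _ component_connected[OF D]])
      (use \<open>D \<subseteq> C\<close> xs(2) D in auto)
qed

lemma component_insert_avoiding:
  assumes C: "is_component E (insert v S) C" and vC: "v \<notin> C"
  shows "is_component E S C"
proof -
  let ?R = "induced_adj E (insert v S)"
  obtain r where C: "C = {y. ?R\<^sup>*\<^sup>* r y}" and "r \<in> insert v S"
    using C unfolding is_component_def by auto
  then have "r \<in> S" using vC by auto
  have "?R\<^sup>*\<^sup>* r y \<Longrightarrow> (induced_adj E S)\<^sup>*\<^sup>* r y" for y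
  proof (induction rule: rtranclp_induct)
    case (step y z)
    then have "y \<noteq> v" "z \<noteq> v" using vC C by (auto intro: rtranclp.rtrancl_into_rtrancl)
    then have "induced_adj E S y z" using step.hyps(2) unfolding induced_adj_def by auto
    then show ?case using step.IH by auto
  qed simp
  moreover have "(induced_adj E S)\<^sup>*\<^sup>* \<le> ?R\<^sup>*\<^sup>*"
    by (rule rtranclp_mono) (auto simp: induced_adj_def)
  ultimately have "C = {y. (induced_adj E S)\<^sup>*\<^sup>* r y}"
    unfolding C by (auto dest: predicate2D)
  then show ?thesis unfolding is_component_def using \<open>r \<in> S\<close> by auto
qed

lemma component_insert_containing:
  assumes "symp E" and C: "is_component E (insert v S) C" and vC: "v \<in> C"
    and iso: "\<forall>u\<in>S. E v u \<longrightarrow> (\<forall>w\<in>S. \<not> E u w)"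
  shows "C = insert v {u \<in> S. E v u}"
proof -
  let ?R = "induced_adj E (insert v S)"
  define W where "W = insert v {u \<in> S. E v u}"
  obtain r where C: "C = {y. ?R\<^sup>*\<^sup>* r y}"
    using C unfolding is_component_def by auto
  have closed: "?R y z \<Longrightarrow> y \<in> W \<longleftrightarrow> z \<in> W" for y z
    using iso \<open>symp E\<close> unfolding W_def induced_adj_def by (auto dest: sympD)
  have "?R\<^sup>*\<^sup>* y z \<Longrightarrow> y \<in> W \<longleftrightarrow> z \<in> W" for y z
    by (induction rule: rtranclp_induct) (auto simp: closed)
  then have "C \<subseteq> W" using vC C W_def by auto
  moreover have "W \<subseteq> C"
    using vC C unfolding W_def induced_adj_def by (auto intro: rtranclp.rtrancl_into_rtrancl)
  ultimately show ?thesis unfolding W_def by auto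
qed

lemma induced_linear_forest_insert:
  assumes ilf: "induced_linear_forest V E S" and "v \<in> V" and "symp E" and "irreflp E"
    and atmost: "\<forall>u\<in>S. \<forall>w\<in>S. E v u \<longrightarrow> E v w \<longrightarrow> u = w"
    and iso: "\<forall>u\<in>S. E v u \<longrightarrow> (\<forall>w\<in>S. \<not> E u w)"
  shows "induced_linear_forest V E (insert v S)"
  unfolding induced_linear_forest_def
proof (intro conjI allI impI)
  show "insert v S \<subseteq> V" using ilf \<open>v \<in> V\<close> unfolding induced_linear_forest_def by auto
  fix C assume C: "is_component E (insert v S) C"
  show "induces_path E C"
  proof (cases "v \<in> C")
    case True
    then have C_eq: "C = insert v {u \<in> S. E v u}"
      using component_insert_containing[OF \<open>symp E\<close> C _ iso] by blast
    show ?thesis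
    proof (cases "\<exists>u\<in>S. E v u")
      case True
      then obtain u where "u \<in> S" "E v u" by auto
      then have "C = {v, u}" using C_eq atmost by auto
      then show ?thesis unfolding induces_path_def
        using \<open>E v u\<close> \<open>symp E\<close> \<open>irreflp E\<close>
        by (intro exI[of _ "[v, u]"]) (auto simp: less_Suc_eq dest: sympD irreflpD)
    next
      case False
      then have "C = {v}" using C_eq by auto
      then show ?thesis unfolding induces_path_def
        using \<open>irreflp E\<close> by (intro exI[of _ "[v]"]) (auto dest: irreflpD)
    qed
  next
    case False
    then show ?thesis
      using component_insert_avoiding[OF C] ilf unfolding induced_linear_forest_def by blast
  qed
qed

lemma induced_size_exchange_less:
  assumes "finite S" and "symp E" and "irreflp E"
    and "u \<in> S" and "w \<in> S" and "E u w"
    and no_adj: "\<forall>x\<in>S - {u}. \<not> E v x"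
  shows "induced_size E (insert v (S - {u})) < induced_size E S"
proof -
  define ES where "ES = {{a, b} | a b. a \<in> S \<and> b \<in> S \<and> E a b}"
  define ET where "ET = {{a, b} | a b. a \<in> insert v (S - {u}) \<and> b \<in> insert v (S - {u}) \<and> E a b}"
  have "ES \<subseteq> Pow S" unfolding ES_def by auto
  then have "finite ES" using \<open>finite S\<close> by (simp add: finite_subset)
  have "ET \<subseteq> ES - {{u, w}}"
  proof
    fix e assume "e \<in> ET"
    then obtain a b where e: "e = {a, b}" "a \<in> insert v (S - {u})" "b \<in> insert v (S - {u})" "E a b"
      unfolding ET_def by auto
    have "\<not> E v x" if "x \<in> insert v (S - {u})" for x
      using that no_adj \<open>irreflp E\<close> by (auto dest: irreflpD)
    then have "a \<noteq> v" "b \<noteq> v" using e(2-4) \<open>symp E\<close> by (metis sympD)+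
    then have "a \<in> S - {u}" "b \<in> S - {u}" using e(2,3) by simp_all
    then have "{a, b} \<in> ES" unfolding ES_def using e(4) by fast
    moreover have "{a, b} \<noteq> {u, w}" using \<open>a \<in> S - {u}\<close> \<open>b \<in> S - {u}\<close> by auto
    ultimately show "e \<in> ES - {{u, w}}" using e(1) by simp
  qed
  then have "card ET \<le> card (ES - {{u, w}})" using \<open>finite ES\<close> by (simp add: card_mono)
  also have "\<dots> < card ES"
    using \<open>finite ES\<close> by (rule card_Diff1_less) (use assms in \<open>auto simp: ES_def\<close>)
  finally have "card ET < card ES" .
  then show ?thesis unfolding induced_size_def ES_def ET_def .
qed

lemma optimal_ilf_two_neighbours:
  assumes opt: "optimal_ilf W E S" and "finite W" and "symp E" and "irreflp E"
    and "v \<in> W" and "v \<notin> S"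
  shows "2 \<le> card {u \<in> S. E v u}"
proof (rule ccontr)
  assume "\<not> 2 \<le> card {u \<in> S. E v u}"
  then have "card {u \<in> S. E v u} \<le> Suc 0" by simp
  obtain ilf: "induced_linear_forest W E S"
    and max: "\<And>T. induced_linear_forest W E T \<Longrightarrow> card T \<le> card S"
    and min: "\<And>T. induced_linear_forest W E T \<Longrightarrow> card T = card S \<Longrightarrow>
                induced_size E S \<le> induced_size E T"
    using opt unfolding optimal_ilf_def by blast
  have "S \<subseteq> W" using ilf unfolding induced_linear_forest_def by blast
  then have "finite S" using \<open>finite W\<close> by (rule finite_subset)
  then have "finite {u \<in> S. E v u}" by simp
  then have "\<forall>x\<in>{u \<in> S. E v u}. \<forall>y\<in>{u \<in> S. E v u}. x = y"
    using card_le_Suc0_iff_eq \<open>card {u \<in> S. E v u} \<le> Suc 0\<close> by blast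
  then have atmost: "\<forall>u\<in>S. \<forall>w\<in>S. E v u \<longrightarrow> E v w \<longrightarrow> u = w" by blast
  show False
  proof (cases "\<exists>u\<in>S. E v u \<and> (\<exists>w\<in>S. E u w)")
    case True
    \<comment> \<open>Swapping the neighbour u for v keeps the order and destroys the edge uw.\<close>
    then obtain u w where "u \<in> S" "E v u" "w \<in> S" "E u w" by blast
    define T where "T = insert v (S - {u})"
    have no_adj: "\<forall>x\<in>S - {u}. \<not> E v x" using atmost \<open>u \<in> S\<close> \<open>E v u\<close> by blast
    have "induced_linear_forest W E (S - {u})"
      by (rule induced_linear_forest_subset[OF ilf]) blast
    then have "induced_linear_forest W E T"
      unfolding T_def
      by (rule induced_linear_forest_insert[OF _ \<open>v \<in> W\<close> \<open>symp E\<close> \<open>irreflp E\<close>])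
        (use no_adj in blast)+
    moreover have "card T = card S"
      unfolding T_def using card.remove[OF \<open>finite S\<close> \<open>u \<in> S\<close>] \<open>finite S\<close> \<open>v \<notin> S\<close> by simp
    ultimately have "induced_size E S \<le> induced_size E T" by (rule min)
    moreover have "induced_size E T < induced_size E S"
      unfolding T_def
      by (rule induced_size_exchange_less[OF \<open>finite S\<close> \<open>symp E\<close> \<open>irreflp E\<close>
            \<open>u \<in> S\<close> \<open>w \<in> S\<close> \<open>E u w\<close> no_adj])
    ultimately show False by simp
  next
    case False
    then have "\<forall>u\<in>S. E v u \<longrightarrow> (\<forall>w\<in>S. \<not> E u w)" by blast
    then have "induced_linear_forest W E (insert v S)"
      by (rule induced_linear_forest_insert[OF ilf \<open>v \<in> W\<close> \<open>symp E\<close> \<open>irreflp E\<close> atmost])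
    then have "card (insert v S) \<le> card S" by (rule max)
    then show False using \<open>finite S\<close> \<open>v \<notin> S\<close> by simp
  qed
qed

theorem claim1:
  fixes V :: "'a set" and E :: "'a \<Rightarrow> 'a \<Rightarrow> bool" and F :: "nat \<Rightarrow> 'a set" and k :: nat
  assumes "simple_graph V E"
    and "\<And>i. 1 \<le> i \<Longrightarrow> i \<le> k \<Longrightarrow> V - (\<Union>j\<in>{1..<i}. F j) \<noteq> {}"
    and "\<And>i. 1 \<le> i \<Longrightarrow> i \<le> k \<Longrightarrow> optimal_ilf (V - (\<Union>j\<in>{1..<i}. F j)) E (F i)"
    and "V = (\<Union>j\<in>{1..k}. F j)"
  shows "\<forall>i\<in>{2..k}. \<forall>v\<in>F i. \<forall>j\<in>{1..<i}. 2 \<le> card {u \<in> F j. E v u}"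
proof (intro ballI)
  fix i v j assume i: "i \<in> {2..k}" and v: "v \<in> F i" and j: "j \<in> {1..<i}"
  have "finite V" and adj: "\<And>u w. E u w \<Longrightarrow> u \<noteq> w \<and> E w u"
    using assms(1) unfolding simple_graph_def by blast+
  then have "symp E" "irreflp E" by (auto intro: sympI irreflpI)
  define W where "W = V - (\<Union>l\<in>{1..<j}. F l)"
  have opt: "optimal_ilf W E (F j)" using assms(3)[of j] i j unfolding W_def by simp
  have "optimal_ilf (V - (\<Union>l\<in>{1..<i}. F l)) E (F i)" using assms(3)[of i] i by simp
  then have "F i \<subseteq> V - (\<Union>l\<in>{1..<i}. F l)"
    unfolding optimal_ilf_def induced_linear_forest_def by blast
  then have "v \<in> W" "v \<notin> F j" using v j unfolding W_def by auto
  moreover have "finite W" using \<open>finite V\<close> unfolding W_def by simp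
  ultimately show "2 \<le> card {u \<in> F j. E v u}"
    using optimal_ilf_two_neighbours[OF opt _ \<open>symp E\<close> \<open>irreflp E\<close>] by blast
qed

end
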